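(* Let $X=(X_1,\dots,X_d)$ be a random vector with values in $\{0,1\}^d$ such that $\mathbb{P}(X=x)>0$ for every $x\in\{0,1\}^d$, and let $G:\{0,1\}^d\to\mathbb{R}$. Suppose there exist a subset $\mathcal{C}\subseteq D:=\{1,\dots,d\}$ with $|\mathcal{C}|<d$ and a function $H:\{0,1\}^{|\mathcal{C}|}\to\mathbb{R}$ such that $G(X)=H(X_{\mathcal{C}})$ almost surely. Write the expansions $$G(X)=\sum_{A\subseteq D}\beta^{(G)}_A e_A(X_A),\qquad H(X_{\mathcal{C}})=\sum_{A\subseteq \mathcal{C}}\beta^{(H)}_A e_A(X_A),$$ where the coefficients are the unique real coefficients for which these identities hold almost surely. Then for every $A\subseteq D$: $\beta^{(G)}_A=\beta^{(H)}_A$ if $A\subseteq\mathcal{C}$, and $\beta^{(G)}_A=0$ if $A\not\subseteq\mathcal{C}$.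
   Context: For $A\subseteq D$, $X_A:=(X_i)_{i\in A}$, $\mathbf{P}_A(x_A):=\mathbb{P}(X_A=x_A)$, and $e_A(X_A):=\dfrac{(-1)^{\sum_{j\in A}X_j}}{\mathbf{P}_A(X_A)}$, with $e_\emptyset(X_\emptyset)=1$. Under the full-support hypothesis, $\{e_A(X_A)\}_{A\subseteq D}$ (resp. $\{e_A(X_A)\}_{A\subseteq\mathcal{C}}$) is a basis of the space of real functions of $X$ (resp. of $X_{\mathcal{C}}$), so the coefficients in the two expansions exist and are unique. *)

theory Defs
  imports "HOL-Probability.Probability"
begin

text \<open>A point of {0,1}^D is a function x :: nat => nat, with x j in {0,1} for j in D
  (values outside D are irrelevant; the law p of X lives on PiE D (\<lambda>_. {0,1})).\<close>

definition cube :: "nat set \<Rightarrow> (nat \<Rightarrow> nat) set" where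
  "cube A = PiE A (\<lambda>_. {0, 1})"

definition marg :: "(nat \<Rightarrow> nat) pmf \<Rightarrow> nat set \<Rightarrow> (nat \<Rightarrow> nat) \<Rightarrow> real" where
  "marg p A x = measure_pmf.prob p {y. \<forall>j\<in>A. y j = x j}"

definition ebasis :: "(nat \<Rightarrow> nat) pmf \<Rightarrow> nat set \<Rightarrow> (nat \<Rightarrow> nat) \<Rightarrow> real" where
  "ebasis p A x = (-1) ^ (\<Sum>j\<in>A. x j) / marg p A x"

end

theory Submission
  imports Defs
begin

text \<open>The functions e_B, B \<subseteq> D, are linearly independent on {0,1}^D, which gives uniqueness
  of the expansion coefficients; the theorem follows by extending the coefficients of H
  by zero to all of Pow D. For independence, test a vanishing combination against the
  alternating sum over the coordinates of an inclusion-maximal A with nonzero coefficient,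
  the others being frozen: flipping a coordinate j \<in> A - B is a sign-reversing involution
  that leaves e_B unchanged, so the test kills every e_B with A \<not>\<subseteq> B (and the B \<supset> A have zero
  coefficient by maximality), while on e_A itself it yields the positive number \<Sum> 1 / P_A.\<close>

lemma ebasis_cong:
  assumes "\<forall>i\<in>B. x i = x' i"
  shows "ebasis p B x = ebasis p B x'"
proof -
  have "(\<Sum>j\<in>B. x j) = (\<Sum>j\<in>B. x' j)" using assms by (intro sum.cong) auto
  moreover have "{y. \<forall>j\<in>B. y j = x j} = {y. \<forall>j\<in>B. y j = x' j}" using assms by auto
  ultimately show ?thesis unfolding ebasis_def marg_def by simp
qed

lemma marg_pos:
  assumes "pmf p x > 0"
  shows "marg p A x > 0"
proof -
  have "pmf p x = measure_pmf.prob p {x}" by (simp add: measure_pmf_single)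
  also have "\<dots> \<le> marg p A x" unfolding marg_def
    by (intro measure_pmf.finite_measure_mono) auto
  finally show ?thesis using assms by linarith
qed

lemma finite_cube: "finite A \<Longrightarrow> finite (cube A)"
  unfolding cube_def by (simp add: finite_PiE)

lemma cube_nonempty: "cube A \<noteq> {}"
  unfolding cube_def by (simp add: PiE_eq_empty_iff)

lemma override_on_in_cube:
  assumes "x \<in> cube D" "y \<in> cube A" "A \<subseteq> D"
  shows "override_on x y A \<in> cube D"
  using assms unfolding cube_def by (auto simp: PiE_iff extensional_def override_on_def)

lemma alternating_sum_cube_eq_0:
  fixes f :: "(nat \<Rightarrow> nat) \<Rightarrow> real"
  assumes "finite A" "j \<in> A"
    and f_indep: "\<And>y y'. \<forall>i\<in>A - {j}. y i = y' i \<Longrightarrow> f y = f y'"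
  shows "(\<Sum>y\<in>cube A. (-1) ^ (\<Sum>i\<in>A. y i) * f y) = 0"
proof -
  define flip where "flip y = y(j := 1 - y j)" for y :: "nat \<Rightarrow> nat"
  define g where "g y = (-1) ^ (\<Sum>i\<in>A. y i) * f y" for y
  have flip_cube: "flip y \<in> cube A" if "y \<in> cube A" for y
    using that \<open>j \<in> A\<close> unfolding flip_def cube_def by (auto simp: PiE_iff extensional_def)
  have flip_flip: "flip (flip y) = y" if "y \<in> cube A" for y
  proof -
    have "y j \<in> {0, 1}" using that \<open>j \<in> A\<close> unfolding cube_def by (auto simp: PiE_iff)
    then show ?thesis unfolding flip_def by (auto simp: fun_eq_iff)
  qed
  have g_flip: "g (flip y) = - g y" if "y \<in> cube A" for y
  proof -
    have yj: "y j \<in> {0, 1}" using that \<open>j \<in> A\<close> unfolding cube_def by (auto simp: PiE_iff)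
    have "(\<Sum>i\<in>A. y i) = y j + (\<Sum>i\<in>A - {j}. y i)"
      using assms(1,2) by (simp add: sum.remove)
    moreover have "(\<Sum>i\<in>A. flip y i) = (1 - y j) + (\<Sum>i\<in>A - {j}. y i)"
      using assms(1,2) by (simp add: sum.remove flip_def)
    ultimately have "(-1::real) ^ (\<Sum>i\<in>A. flip y i) = - ((-1) ^ (\<Sum>i\<in>A. y i))"
      using yj by (auto simp: power_add)
    moreover have "f (flip y) = f y" by (rule f_indep) (simp add: flip_def)
    ultimately show ?thesis unfolding g_def by simp
  qed
  have "sum g (cube A) = sum (g \<circ> flip) (cube A)"
    by (rule sum.reindex_bij_witness[of _ flip flip]) (auto simp: flip_cube flip_flip)
  also have "\<dots> = - sum g (cube A)" by (simp add: g_flip sum_negf[symmetric])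
  finally show ?thesis unfolding g_def by simp
qed

lemma alternating_sum_ebasis_eq_0:
  assumes "finite A" "j \<in> A" "j \<notin> B"
  shows "(\<Sum>y\<in>cube A. (-1) ^ (\<Sum>i\<in>A. y i) * ebasis p B (override_on x y A)) = 0"
  using assms by (intro alternating_sum_cube_eq_0 ebasis_cong) (auto simp: override_on_def)

lemma alternating_sum_ebasis_self_pos:
  assumes "finite A" and pos: "\<forall>y\<in>cube A. pmf p (override_on x y A) > 0"
  shows "(\<Sum>y\<in>cube A. (-1) ^ (\<Sum>i\<in>A. y i) * ebasis p A (override_on x y A)) > 0"
proof -
  have "(-1::real) ^ (\<Sum>i\<in>A. y i) * ebasis p A (override_on x y A)
      = 1 / marg p A (override_on x y A)" for y
    unfolding ebasis_def by (simp add: power_mult_distrib[symmetric])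
  moreover have "(\<Sum>y\<in>cube A. 1 / marg p A (override_on x y A)) > 0"
    using assms by (intro sum_pos finite_cube cube_nonempty) (auto intro: marg_pos)
  ultimately show ?thesis by simp
qed

lemma ebasis_linear_independent:
  assumes "finite D"
    and pos: "\<forall>x\<in>cube D. pmf p x > 0"
    and vanish: "\<forall>x\<in>cube D. (\<Sum>B\<in>Pow D. c B * ebasis p B x) = 0"
  shows "\<forall>A\<in>Pow D. c A = 0"
proof (rule ccontr)
  assume "\<not> (\<forall>A\<in>Pow D. c A = 0)"
  then have "finite {B \<in> Pow D. c B \<noteq> 0}" "{B \<in> Pow D. c B \<noteq> 0} \<noteq> {}"
    using \<open>finite D\<close> by auto
  from finite_has_maximal[OF this] obtain A where A: "A \<in> Pow D" "c A \<noteq> 0"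
    and maximal: "\<And>B. B \<in> Pow D \<Longrightarrow> c B \<noteq> 0 \<Longrightarrow> A \<subseteq> B \<Longrightarrow> A = B"
    by auto
  have "finite A" using A \<open>finite D\<close> by (auto intro: finite_subset)
  obtain x where x: "x \<in> cube D" using cube_nonempty by blast
  define test where "test B = (\<Sum>y\<in>cube A. (-1) ^ (\<Sum>i\<in>A. y i) * ebasis p B (override_on x y A))"
    for B
  have in_cube: "override_on x y A \<in> cube D" if "y \<in> cube A" for y
    using override_on_in_cube[OF x that] A by simp
  have others: "c B * test B = 0" if "B \<in> Pow D - {A}" for B
  proof (cases "A \<subseteq> B")
    case True
    then show ?thesis using maximal that by auto
  next
    case False
    then obtain j where "j \<in> A" "j \<notin> B" by auto
    then show ?thesis unfolding test_def using alternating_sum_ebasis_eq_0 \<open>finite A\<close> by simp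
  qed
  have "0 = (\<Sum>y\<in>cube A. (-1) ^ (\<Sum>i\<in>A. y i) *
              (\<Sum>B\<in>Pow D. c B * ebasis p B (override_on x y A)))"
    using vanish in_cube by simp
  also have "\<dots> = (\<Sum>B\<in>Pow D. c B * test B)"
    unfolding test_def sum_distrib_left by (subst sum.swap) (simp add: mult.left_commute)
  also have "\<dots> = c A * test A + (\<Sum>B\<in>Pow D - {A}. c B * test B)"
    using A \<open>finite D\<close> by (intro sum.remove) auto
  also have "\<dots> = c A * test A" using others by (simp add: sum.neutral)
  finally have "c A * test A = 0" by simp
  moreover have "test A > 0"
    unfolding test_def using alternating_sum_ebasis_self_pos \<open>finite A\<close> pos in_cube by blast
  ultimately show False using A by simp
qed

lemma ebasis_coefficients_unique:
  assumes "finite D"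
    and "\<forall>x\<in>cube D. pmf p x > 0"
    and "\<forall>x\<in>cube D. (\<Sum>B\<in>Pow D. a B * ebasis p B x) = (\<Sum>B\<in>Pow D. b B * ebasis p B x)"
  shows "\<forall>A\<in>Pow D. a A = b A"
  using ebasis_linear_independent[of D p "\<lambda>B. a B - b B"] assms
  by (simp add: left_diff_distrib sum_subtractf)

theorem corollary2:
  fixes d :: nat
    and p :: "(nat \<Rightarrow> nat) pmf"
    and G :: "(nat \<Rightarrow> nat) \<Rightarrow> real"
    and C :: "nat set"
    and H :: "(nat \<Rightarrow> nat) \<Rightarrow> real"
    and betaG betaH :: "nat set \<Rightarrow> real"
  assumes range_X: "set_pmf p \<subseteq> cube {1..d}"
    and full_support: "\<forall>x\<in>cube {1..d}. pmf p x > 0"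
    and C_sub: "C \<subseteq> {1..d}"
    and C_card: "card C < d"
    and GH: "AE x in measure_pmf p. G x = H (restrict x C)"
    and expG: "AE x in measure_pmf p. G x = (\<Sum>A\<in>Pow {1..d}. betaG A * ebasis p A x)"
    and expH: "AE x in measure_pmf p. H (restrict x C) = (\<Sum>A\<in>Pow C. betaH A * ebasis p A x)"
  shows "\<forall>A. A \<subseteq> {1..d} \<longrightarrow>
           (A \<subseteq> C \<longrightarrow> betaG A = betaH A) \<and> (\<not> A \<subseteq> C \<longrightarrow> betaG A = 0)"
proof -
  define betaH' where "betaH' A = (if A \<subseteq> C then betaH A else 0)" for A
  have "(\<Sum>A\<in>Pow {1..d}. betaG A * ebasis p A x) = (\<Sum>A\<in>Pow {1..d}. betaH' A * ebasis p A x)"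
    if "x \<in> cube {1..d}" for x
  proof -
    have "x \<in> set_pmf p" using that full_support by (auto simp: set_pmf_iff)
    then have "(\<Sum>A\<in>Pow {1..d}. betaG A * ebasis p A x) = (\<Sum>A\<in>Pow C. betaH A * ebasis p A x)"
      using expG expH GH by (simp add: AE_measure_pmf_iff)
    also have "\<dots> = (\<Sum>A\<in>Pow {1..d}. betaH' A * ebasis p A x)"
      using C_sub by (intro sum.mono_neutral_cong_left) (auto simp: betaH'_def)
    finally show ?thesis .
  qed
  then have "\<forall>A\<in>Pow {1..d}. betaG A = betaH' A"
    using full_support by (intro ebasis_coefficients_unique) auto
  then show ?thesis by (auto simp: betaH'_def)
qed

end
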